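(* Let $\alpha\in(0,1]$ and $\lambda\in\mathbb{C}$ with $\operatorname{Re}\lambda>-1$ and $\lambda\notin\{0,1\}$. Then there is no nontrivial $\psi\in C^\infty[0,1]$ solving \[ z(1-z)\psi''(z)+\big(\lambda-\sqrt{1-\alpha}-2\lambda z\big)\psi'(z)-\lambda(\lambda-1)\psi(z)=0 . \] In particular, $U_{\alpha,\infty,\kappa}$ is mode-stable: every $\lambda\in\mathbb{C}$ for which there exists $0\ne\phi\in C^\infty[-1,1]$ with \[ \Big(\lambda^2+\lambda-\frac{2\alpha\lambda}{1+\sqrt{1-\alpha}\,y}\Big)\phi+\Big(2\lambda+2-\frac{2\alpha}{1+\sqrt{1-\alpha}\,y}\Big)y\,\phi'+(y^2-1)\phi''=0 \] satisfies either $\operatorname{Re}\lambda<0$ or $\lambda\in\{0,1\}$.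
   Context: The hypergeometric ODE is obtained from $(y^2-1)\phi''+(2\lambda y+2\sqrt{1-\alpha})\phi'+(\lambda^2-\lambda)\phi=0$ on $[-1,1]$ via $y=2z-1$, $\phi(y)=\psi(z)$. $U_{\alpha,\infty,\kappa}(s,y)=\alpha s-\alpha\ln(1+\sqrt{1-\alpha}y)+\kappa$; its linearised operator's eigenvalues are the $\lambda$ for which the second displayed ODE has a nonzero smooth solution on $[-1,1]$, and mode-stability means each such eigenvalue has negative real part or equals $0$ or $1$. *)

theory Defs
  imports "HOL-Analysis.Analysis"
begin

definition dwithin :: "real set \<Rightarrow> (real \<Rightarrow> complex) \<Rightarrow> real \<Rightarrow> complex" where
  "dwithin S f x = vector_derivative f (at x within S)"

definition C_inf_on :: "real set \<Rightarrow> (real \<Rightarrow> complex) \<Rightarrow> bool" where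
  "C_inf_on S f \<longleftrightarrow> (\<exists>D. D 0 = f \<and>
      (\<forall>n. \<forall>x\<in>S. (D n has_vector_derivative D (Suc n) x) (at x within S)))"

end

theory Submission
  imports Defs
begin

text \<open>
  For the hypergeometric equation with parameters \<open>(a, b, c)\<close>, the \<open>k\<close>-th derivative \<open>D\<^sub>k\<close> of a smooth
  solution solves the equation with parameters \<open>(a + k, b + k, c + k)\<close>. For large \<open>k\<close> the Pearson
  weight \<open>w = z\<^bsup>c+k-1\<^esup> (1 - z)\<^bsup>a+b-c+k\<^esup>\<close> is continuous on \<open>[0, 1]\<close> and makes the operator symmetric,
  so the moments of \<open>w D\<^sub>k\<close> obey a two-term recursion starting from \<open>0\<close>, and \<open>D\<^sub>k = 0\<close> by Weierstrass
  approximation. Going back down, \<open>(a + j) (b + j) D\<^sub>j\<close> is a combination of \<open>D\<^sub>j\<^sub>+\<^sub>1\<close> and \<open>D\<^sub>j\<^sub>+\<^sub>2\<close>, and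
  for \<open>a = \<lambda> - 1\<close>, \<open>b = \<lambda>\<close> these factors vanish only if \<open>\<lambda>\<close> is \<open>0\<close>, \<open>1\<close> or a negative integer.

  For the mode equation, with \<open>s = sqrt (1 - \<alpha>)\<close>, the ladder operator
  \<open>\<phi> \<mapsto> (1 + s y)\<^bsup>1-\<lambda>\<^esup> ((1 + s y)\<^sup>\<lambda> \<phi>)'\<close> maps solutions for \<open>\<lambda>\<close> to solutions for \<open>\<lambda> + 1\<close>.
  When \<open>Re \<lambda> \<ge> 0\<close>, two steps reach \<open>\<mu> = \<lambda> + 2\<close> with \<open>Re \<mu> > 1 + s\<close>. There the substitution
  \<open>y = (2z - 1 - s) / (1 + s - 2sz)\<close> together with the factor \<open>(1 + s - 2sz)\<^bsup>-\<mu>\<^esup>\<close> turns the mode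
  equation into the hypergeometric one with parameters \<open>(\<mu> - 1, \<mu>, \<mu> - s)\<close>, for which two
  derivatives already suffice for the weighted argument. Going back down, a solution annihilated by
  the ladder operator has \<open>(1 + s y) \<phi>' = - s \<lambda> \<phi>\<close>, which reduces the mode equation to
  \<open>\<alpha> \<lambda> (\<lambda> - 1) \<phi> = 0\<close>.
\<close>

section \<open>Smooth functions on a closed interval\<close>

definition deriv_seq_on :: "real set \<Rightarrow> (nat \<Rightarrow> real \<Rightarrow> complex) \<Rightarrow> bool" where
  "deriv_seq_on S D \<longleftrightarrow> (\<forall>n. \<forall>x\<in>S. (D n has_vector_derivative D (Suc n) x) (at x within S))"

lemma C_inf_on_iff_deriv_seq_on: "C_inf_on S f \<longleftrightarrow> (\<exists>D. D 0 = f \<and> deriv_seq_on S D)"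
  by (simp add: C_inf_on_def deriv_seq_on_def)

lemma deriv_seq_onD:
  "deriv_seq_on S D \<Longrightarrow> x \<in> S \<Longrightarrow> (D n has_vector_derivative D (Suc n) x) (at x within S)"
  by (simp add: deriv_seq_on_def)

lemma deriv_seq_on_continuous: "deriv_seq_on S D \<Longrightarrow> continuous_on S (D n)"
  by (meson continuous_on_vector_derivative deriv_seq_onD)

lemma deriv_seq_on_interior:
  assumes "deriv_seq_on {a..b} D" and "x \<in> {a<..<b}"
  shows "(D n has_vector_derivative D (Suc n) x) (at x)"
proof -
  have "at x within {a..b} = at x"
    using assms(2) by (intro at_within_interior) simp
  then show ?thesis
    using deriv_seq_onD[OF assms(1), of x n] assms(2) by simp
qed

lemma has_vector_derivative_eq_0_if_vanishing:
  fixes F :: "real \<Rightarrow> complex"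
  assumes "a < b" and "x \<in> {a..b}" and "\<forall>y\<in>{a..b}. F y = 0"
    and "(F has_vector_derivative F') (at x within {a..b})"
  shows "F' = 0"
proof -
  have "(F has_vector_derivative 0) (at x within {a..b})"
    by (rule has_vector_derivative_transform_within[of "\<lambda>_. 0" _ _ _ 1]) (use assms in auto)
  then show ?thesis
    using vector_derivative_unique_within_closed_interval[of a b x F F' 0] assms by simp
qed

lemma dwithin_deriv_seq_on:
  assumes ab: "a < b" and D: "deriv_seq_on {a..b} D" and x: "x \<in> {a..b}"
  shows "dwithin {a..b} (D 0) x = D (Suc 0) x"
    and "dwithin {a..b} (dwithin {a..b} (D 0)) x = D (Suc (Suc 0)) x"
proof -
  have D1: "dwithin {a..b} (D 0) y = D (Suc 0) y" if "y \<in> {a..b}" for y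
    unfolding dwithin_def
    by (rule vector_derivative_within_closed_interval[OF ab that deriv_seq_onD[OF D that]])
  then show "dwithin {a..b} (D 0) x = D (Suc 0) x"
    using x by simp
  have "(dwithin {a..b} (D 0) has_vector_derivative D (Suc (Suc 0)) x) (at x within {a..b})"
    by (rule has_vector_derivative_transform_within[of "D (Suc 0)" _ _ _ 1])
       (use deriv_seq_onD[OF D x] x D1 in auto)
  then show "dwithin {a..b} (dwithin {a..b} (D 0)) x = D (Suc (Suc 0)) x"
    unfolding dwithin_def[of _ "dwithin {a..b} (D 0)"]
    by (rule vector_derivative_within_closed_interval[OF ab x])
qed

section \<open>Weighted integrals of hypergeometric solutions\<close>

definition hypergeometric_op ::
    "complex \<Rightarrow> complex \<Rightarrow> complex \<Rightarrow> real \<Rightarrow> complex \<Rightarrow> complex \<Rightarrow> complex \<Rightarrow> complex" where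
  "hypergeometric_op a b c z f f' f'' =
     of_real (z * (1 - z)) * f'' + (c - (a + b + 1) * of_real z) * f' - a * b * f"

definition hypergeometric_solution ::
    "complex \<Rightarrow> complex \<Rightarrow> complex \<Rightarrow> (real \<Rightarrow> complex) \<Rightarrow> (real \<Rightarrow> complex) \<Rightarrow> (real \<Rightarrow> complex) \<Rightarrow> bool" where
  "hypergeometric_solution a b c f f' f'' \<longleftrightarrow>
     continuous_on {0..1} f \<and> continuous_on {0..1} f' \<and>
     (\<forall>z\<in>{0<..<1}. (f has_vector_derivative f' z) (at z) \<and> (f' has_vector_derivative f'' z) (at z) \<and>
        hypergeometric_op a b c z (f z) (f' z) (f'' z) = 0)"

text \<open>Lagrange's identity: the hypergeometric operator is formally self-adjoint with respect to any
  weight solving the Pearson equation \<open>w' = w ((c-1)/z - (a+b-c)/(1-z))\<close>.\<close>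

lemma hypergeometric_op_Lagrange_identity:
  fixes w f g :: "real \<Rightarrow> complex"
  assumes z: "z \<in> {0<..<1}"
    and w': "(w has_vector_derivative w z * ((c - 1) / of_real z - (a + b - c) / of_real (1 - z))) (at z)"
    and f: "(f has_vector_derivative f' z) (at z)" "(f' has_vector_derivative f'' z) (at z)"
    and g: "(g has_vector_derivative g' z) (at z)" "(g' has_vector_derivative g'' z) (at z)"
    and eq: "hypergeometric_op a b c z (f z) (f' z) (f'' z) = 0"
  shows "((\<lambda>z. of_real (z * (1 - z)) * w z * (f z * g' z - f' z * g z)) has_vector_derivative
      w z * f z * hypergeometric_op a b c z (g z) (g' z) (g'' z)) (at z)"
proof -
  define X Q R C where "X = complex_of_real (z * (1 - z))"
    and "Q = (c - 1) / of_real z - (a + b - c) / of_real (1 - z)"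
    and "R = complex_of_real (1 - 2 * z)" and "C = c - (a + b + 1) * of_real z"
  have "((\<lambda>z. complex_of_real (z * (1 - z))) has_vector_derivative R) (at z)"
    unfolding R_def by (auto intro!: derivative_eq_intros)
  then have "((\<lambda>z. of_real (z * (1 - z)) * w z * (f z * g' z - f' z * g z)) has_vector_derivative
      X * w z * ((f z * g'' z + f' z * g' z) - (f' z * g' z + f'' z * g z))
      + (X * (w z * Q) + R * w z) * (f z * g' z - f' z * g z)) (at z)"
    unfolding Q_def X_def by (intro has_vector_derivative_mult has_vector_derivative_diff f g w')
  moreover have "X * w z * ((f z * g'' z + f' z * g' z) - (f' z * g' z + f'' z * g z))
      + (X * (w z * Q) + R * w z) * (f z * g' z - f' z * g z)
    = w z * f z * (X * g'' z + C * g' z - a * b * g z)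
      - w z * g z * (X * f'' z + C * f' z - a * b * f z)
      + w z * (f z * g' z - f' z * g z) * (X * Q + R - C)"
    by (simp add: algebra_simps)
  moreover have "X * Q + R = C"
    using z by (simp add: X_def Q_def R_def C_def field_simps)
  ultimately show ?thesis
    using eq by (simp add: hypergeometric_op_def X_def C_def)
qed

lemma hypergeometric_op_weighted_integral_eq_0:
  fixes w g g' g'' :: "real \<Rightarrow> complex"
  assumes sol: "hypergeometric_solution a b c f f' f''"
    and w: "continuous_on {0..1} w"
    and w': "\<And>z. z \<in> {0<..<1} \<Longrightarrow>
               (w has_vector_derivative w z * ((c - 1) / of_real z - (a + b - c) / of_real (1 - z))) (at z)"
    and g': "\<And>z. (g has_vector_derivative g' z) (at z)"
    and g'': "\<And>z. (g' has_vector_derivative g'' z) (at z)"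
  shows "((\<lambda>z. w z * f z * hypergeometric_op a b c z (g z) (g' z) (g'' z)) has_integral 0) {0..1}"
proof -
  define H where "H z = of_real (z * (1 - z)) * w z * (f z * g' z - f' z * g z)" for z
  have "continuous_on {0..1} g" "continuous_on {0..1} g'"
    using g' g'' continuous_on_vector_derivative has_vector_derivative_at_within by blast+
  with sol w have "continuous_on {0..1} H"
    unfolding H_def hypergeometric_solution_def by (intro continuous_intros) auto
  moreover have "(H has_vector_derivative w z * f z * hypergeometric_op a b c z (g z) (g' z) (g'' z)) (at z)"
    if "z \<in> {0<..<1}" for z
    using sol that unfolding H_def[abs_def] hypergeometric_solution_def
    by (intro hypergeometric_op_Lagrange_identity w' g' g'') auto
  ultimately have "((\<lambda>z. w z * f z * hypergeometric_op a b c z (g z) (g' z) (g'' z)) has_integral H 1 - H 0) {0..1}"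
    by (intro fundamental_theorem_of_calculus_interior) auto
  then show ?thesis
    by (simp add: H_def)
qed

lemma hypergeometric_op_monomial:
  "hypergeometric_op a b c z (of_real (z ^ Suc m)) (of_nat (Suc m) * of_real (z ^ m))
       (of_nat (Suc m) * of_nat m * of_real (z ^ (m - 1)))
     = of_nat (Suc m) * (of_nat m + c) * of_real (z ^ m)
       - (of_nat (Suc m) + a) * (of_nat (Suc m) + b) * of_real (z ^ Suc m)"
  by (cases m) (simp_all add: hypergeometric_op_def algebra_simps)

lemma hypergeometric_op_weighted_monomial_integral_eq_0:
  assumes sol: "hypergeometric_solution a b c f f' f''"
    and w: "continuous_on {0..1} w"
    and w': "\<And>z. z \<in> {0<..<1} \<Longrightarrow>
               (w has_vector_derivative w z * ((c - 1) / of_real z - (a + b - c) / of_real (1 - z))) (at z)"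
  shows "integral {0..1} (\<lambda>z. w z * f z * hypergeometric_op a b c z (of_real (z ^ Suc m))
      (of_nat (Suc m) * of_real (z ^ m)) (of_nat (Suc m) * of_nat m * of_real (z ^ (m - 1)))) = 0"
proof -
  have "((\<lambda>z. complex_of_real (z ^ Suc m)) has_vector_derivative of_nat (Suc m) * of_real (z ^ m)) (at z)" for z
    using has_vector_derivative_of_real[OF DERIV_pow[of "Suc m" z UNIV]] by simp
  moreover have "((\<lambda>z. of_nat (Suc m) * complex_of_real (z ^ m)) has_vector_derivative
      of_nat (Suc m) * of_nat m * of_real (z ^ (m - 1))) (at z)" for z
    using has_vector_derivative_of_real[OF DERIV_pow[of m z UNIV]]
    by (auto dest: has_vector_derivative_mult_right[of _ _ _ "of_nat (Suc m)"] simp: mult.assoc)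
  ultimately show ?thesis
    by (intro integral_unique hypergeometric_op_weighted_integral_eq_0[OF sol w w'])
qed

lemma hypergeometric_solution_weighted_moments_eq_0:
  assumes sol: "hypergeometric_solution a b c f f' f''"
    and w: "continuous_on {0..1} w"
    and w': "\<And>z. z \<in> {0<..<1} \<Longrightarrow>
               (w has_vector_derivative w z * ((c - 1) / of_real z - (a + b - c) / of_real (1 - z))) (at z)"
    and nz: "\<And>m::nat. (of_nat m + a) * (of_nat m + b) \<noteq> 0"
  shows "integral {0..1} (\<lambda>z. w z * f z * of_real (z ^ m)) = 0"
proof -
  define I where "I m = integral {0..1} (\<lambda>z. w z * f z * of_real (z ^ m))" for m
  have int: "(\<lambda>z. w z * f z * of_real (z ^ m)) integrable_on {0..1}" for m
    using sol w by (intro integrable_continuous_real continuous_intros) (auto simp: hypergeometric_solution_def)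
  have "integral {0..1} (\<lambda>z. w z * f z * hypergeometric_op a b c z 1 0 0) = 0"
    by (intro integral_unique hypergeometric_op_weighted_integral_eq_0[OF sol w w']) auto
  then have "- (a * b) * I 0 = 0"
    by (simp add: I_def hypergeometric_op_def mult.commute)
  then have "I 0 = 0"
    using nz[of 0] by simp
  moreover have "I (Suc m) = 0" if "I m = 0" for m
  proof -
    have "w z * f z * hypergeometric_op a b c z (of_real (z ^ Suc m))
        (of_nat (Suc m) * of_real (z ^ m)) (of_nat (Suc m) * of_nat m * of_real (z ^ (m - 1)))
      = of_nat (Suc m) * (of_nat m + c) * (w z * f z * of_real (z ^ m))
        - (of_nat (Suc m) + a) * (of_nat (Suc m) + b) * (w z * f z * of_real (z ^ Suc m))" for z
      unfolding hypergeometric_op_monomial by (simp add: algebra_simps)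
    moreover have "((\<lambda>z. of_nat (Suc m) * (of_nat m + c) * (w z * f z * of_real (z ^ m))
        - (of_nat (Suc m) + a) * (of_nat (Suc m) + b) * (w z * f z * of_real (z ^ Suc m))) has_integral
        of_nat (Suc m) * (of_nat m + c) * I m - (of_nat (Suc m) + a) * (of_nat (Suc m) + b) * I (Suc m)) {0..1}"
      unfolding I_def by (intro has_integral_diff has_integral_mult_right integrable_integral int)
    ultimately have "of_nat (Suc m) * (of_nat m + c) * I m - (of_nat (Suc m) + a) * (of_nat (Suc m) + b) * I (Suc m) = 0"
      using hypergeometric_op_weighted_monomial_integral_eq_0[OF sol w w', of m] by (simp add: integral_unique)
    then show ?thesis
      using that nz[of "Suc m"] by simp
  qed
  ultimately show ?thesis
    unfolding I_def[symmetric] by (induction m) auto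
qed

lemma integral_mult_polynomial_eq_0:
  fixes h q :: "real \<Rightarrow> complex"
  assumes h: "continuous_on {0..1} h"
    and moments: "\<And>m. integral {0..1} (\<lambda>z. h z * of_real (z ^ m)) = 0"
    and q: "polynomial_function q"
  shows "integral {0..1} (\<lambda>z. h z * q z) = 0"
proof -
  have real_poly: "integral {0..1} (\<lambda>z. h z * of_real (p z)) = 0" if "real_polynomial_function p" for p
  proof -
    obtain a n where p: "p = (\<lambda>x. \<Sum>i\<le>n. a i * x ^ i)"
      using \<open>real_polynomial_function p\<close> real_polynomial_function_iff_sum by blast
    have "integral {0..1} (\<lambda>z. h z * of_real (p z))
        = integral {0..1} (\<lambda>z. \<Sum>i\<le>n. of_real (a i) * (h z * of_real (z ^ i)))"
      by (simp add: p sum_distrib_left algebra_simps)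
    also have "\<dots> = 0"
      using h by (subst integral_sum) (simp_all add: integrable_continuous_real continuous_on_mult_left
          continuous_on_mult continuous_on_of_real continuous_on_power moments del: of_real_power)
    finally show ?thesis .
  qed
  have cq: "continuous_on {0..1} q"
    using q by (rule continuous_on_polymonial_function)
  have "(\<lambda>z. h z * of_real (Re (q z))) integrable_on {0..1}"
    "(\<lambda>z. \<i> * (h z * of_real (Im (q z)))) integrable_on {0..1}"
    by (intro integrable_continuous_real continuous_intros h cq)+
  moreover have "h z * q z = h z * of_real (Re (q z)) + \<i> * (h z * of_real (Im (q z)))" for z
    by (simp add: complex_eq_iff)
  ultimately have "integral {0..1} (\<lambda>z. h z * q z)
      = integral {0..1} (\<lambda>z. h z * of_real (Re (q z))) + \<i> * integral {0..1} (\<lambda>z. h z * of_real (Im (q z)))"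
    by (simp only: integral_add integral_mult_right)
  moreover have "real_polynomial_function (\<lambda>z. Re (q z))" "real_polynomial_function (\<lambda>z. Im (q z))"
    using q bounded_linear_Re bounded_linear_Im unfolding polynomial_function_def o_def by blast+
  ultimately show ?thesis
    using real_poly by simp
qed

lemma norm_integral_mult_cnj_le:
  fixes h :: "real \<Rightarrow> complex"
  assumes h: "continuous_on {0..1} h"
    and moments: "\<And>m. integral {0..1} (\<lambda>z. h z * of_real (z ^ m)) = 0"
    and e: "0 < e"
  shows "norm (integral {0..1} (\<lambda>z. h z * cnj (h z))) \<le> e * integral {0..1} (\<lambda>z. norm (h z))"
proof -
  have "continuous_on {0..1} (\<lambda>x. cnj (h x))"
    by (intro continuous_intros h)
  then obtain q where q: "polynomial_function q" and approx: "\<forall>x\<in>{0..1}. norm (cnj (h x) - q x) < e"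
    using Stone_Weierstrass_polynomial_function[OF compact_Icc _ e] by blast
  have cq: "continuous_on {0..1} q"
    using q by (rule continuous_on_polymonial_function)
  have int: "(\<lambda>z. h z * g z) integrable_on {0..1}" if "continuous_on {0..1} g" for g
    by (intro integrable_continuous_real continuous_intros h that)
  have "integral {0..1} (\<lambda>z. h z * cnj (h z))
      = integral {0..1} (\<lambda>z. h z * cnj (h z)) - integral {0..1} (\<lambda>z. h z * q z)"
    using integral_mult_polynomial_eq_0[OF h moments q] by simp
  also have "\<dots> = integral {0..1} (\<lambda>z. h z * cnj (h z) - h z * q z)"
    by (intro integral_diff[symmetric] int continuous_intros h cq)
  also have "\<dots> = integral {0..1} (\<lambda>z. h z * (cnj (h z) - q z))"
    by (simp add: algebra_simps)
  finally have "norm (integral {0..1} (\<lambda>z. h z * cnj (h z))) \<le> integral {0..1} (\<lambda>z. e * norm (h z))"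
  proof (rule ssubst, intro integral_norm_bound_integral)
    show "(\<lambda>z. h z * (cnj (h z) - q z)) integrable_on {0..1}" "(\<lambda>z. e * norm (h z)) integrable_on {0..1}"
      by (intro int integrable_continuous_real continuous_intros h cq)+
    show "norm (h z * (cnj (h z) - q z)) \<le> e * norm (h z)" if "z \<in> {0..1}" for z
    proof -
      have "norm (cnj (h z) - q z) \<le> e"
        using approx that less_imp_le by blast
      then show ?thesis
        unfolding norm_mult by (metis mult.commute mult_left_mono norm_ge_zero)
    qed
  qed
  then show ?thesis
    by simp
qed

lemma integral_mult_cnj_eq_0_imp_eq_0:
  fixes h :: "real \<Rightarrow> complex"
  assumes h: "continuous_on {0..1} h"
    and int: "integral {0..1} (\<lambda>z. h z * cnj (h z)) = 0"
    and z: "z \<in> {0..1}"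
  shows "h z = 0"
proof -
  define N where "N z = norm (h z) ^ 2" for z
  have cN: "continuous_on {0..1} N"
    unfolding N_def using h by (intro continuous_intros)
  have "((\<lambda>z. complex_of_real (N z)) has_integral of_real (integral {0..1} N)) {0..1}"
    using cN by (intro has_integral_of_real integrable_integral integrable_continuous_real)
  moreover have "(\<lambda>z. complex_of_real (N z)) = (\<lambda>z. h z * cnj (h z))"
    unfolding N_def complex_norm_square ..
  ultimately have N0: "(N has_integral 0) (cbox 0 1)"
    using int cN
    by (metis (no_types) cbox_interval integrable_continuous_real integrable_integral integral_unique of_real_eq_0_iff)
  have "N z = 0"
  proof (rule has_integral_0_cbox_imp_0[OF _ _ N0])
    show "continuous_on (cbox 0 1) N" "z \<in> cbox 0 1"
      using cN z by (simp_all add: cbox_interval)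
  qed (simp_all add: N_def)
  then show ?thesis
    by (simp add: N_def)
qed

lemma continuous_orthogonal_to_monomials_eq_0:
  fixes h :: "real \<Rightarrow> complex"
  assumes h: "continuous_on {0..1} h"
    and moments: "\<And>m. integral {0..1} (\<lambda>z. h z * of_real (z ^ m)) = 0"
    and z: "z \<in> {0..1}"
  shows "h z = 0"
proof (rule integral_mult_cnj_eq_0_imp_eq_0[OF h _ z])
  define K where "K = integral {0..1} (\<lambda>z. norm (h z))"
  have K: "0 \<le> K"
    unfolding K_def using h by (intro integral_nonneg integrable_continuous_real continuous_intros) auto
  have "norm (integral {0..1} (\<lambda>z. h z * cnj (h z))) \<le> 0 + e" if "0 < e" for e
  proof -
    have "norm (integral {0..1} (\<lambda>z. h z * cnj (h z))) \<le> e / (K + 1) * K"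
      using norm_integral_mult_cnj_le[OF h moments, of "e / (K + 1)", folded K_def] that K by simp
    also have "\<dots> \<le> e"
      using that K by (simp add: field_simps)
    finally show ?thesis
      by simp
  qed
  then show "integral {0..1} (\<lambda>z. h z * cnj (h z)) = 0"
    using field_le_epsilon[of "norm (integral {0..1} (\<lambda>z. h z * cnj (h z)))" 0] by simp
qed

lemma has_vector_derivative_of_real_powr:
  fixes a :: complex
  assumes "0 < x"
  shows "((\<lambda>x. of_real x powr a) has_vector_derivative a * of_real x powr a / of_real x) (at x within S)"
proof -
  have "((\<lambda>w. w powr a) has_field_derivative a * of_real x powr (a - 1)) (at (of_real x))"
    using assms by (intro has_field_derivative_powr) (auto simp: complex_nonpos_Reals_iff)
  then show ?thesis
    using has_vector_derivative_real_field[of "\<lambda>w. w powr a"] by (simp add: powr_diff)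
qed

definition hypergeometric_weight :: "complex \<Rightarrow> complex \<Rightarrow> complex \<Rightarrow> real \<Rightarrow> complex" where
  "hypergeometric_weight a b c z = of_real z powr (c - 1) * of_real (1 - z) powr (a + b - c)"

lemma continuous_on_hypergeometric_weight:
  assumes "1 < Re c" and "0 < Re (a + b - c)"
  shows "continuous_on {0..1} (hypergeometric_weight a b c)"
proof -
  have pw: "continuous_on {0..} (\<lambda>x. of_real x powr e :: complex)" if "0 < Re e" for e
    using that by (intro continuous_intros) auto
  have "continuous_on {0..1} (\<lambda>z. of_real z powr (c - 1))"
    by (rule continuous_on_subset[OF pw]) (use assms in auto)
  moreover have "continuous_on {0..1} (\<lambda>z. of_real (1 - z) powr (a + b - c))"
    by (rule continuous_on_compose2[OF pw[of "a + b - c"] continuous_on_diff[OF continuous_on_const continuous_on_id]])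
      (use assms in auto)
  ultimately show ?thesis
    unfolding hypergeometric_weight_def[abs_def] by (rule continuous_on_mult)
qed

lemma has_vector_derivative_hypergeometric_weight:
  assumes "z \<in> {0<..<1}"
  shows "(hypergeometric_weight a b c has_vector_derivative
      hypergeometric_weight a b c z * ((c - 1) / of_real z - (a + b - c) / of_real (1 - z))) (at z)"
proof -
  have "((\<lambda>z. of_real (1 - z) powr (a + b - c)) has_vector_derivative
      (- 1) *\<^sub>R ((a + b - c) * of_real (1 - z) powr (a + b - c) / of_real (1 - z))) (at z)"
    using assms by (intro vector_diff_chain_at[unfolded o_def, OF _ has_vector_derivative_of_real_powr])
      (auto intro!: derivative_eq_intros)
  then have "(hypergeometric_weight a b c has_vector_derivative
      of_real z powr (c - 1) * (- ((a + b - c) * of_real (1 - z) powr (a + b - c) / of_real (1 - z)))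
      + (c - 1) * of_real z powr (c - 1) / of_real z * of_real (1 - z) powr (a + b - c)) (at z)"
    unfolding hypergeometric_weight_def[abs_def] using assms
    by (intro has_vector_derivative_mult has_vector_derivative_of_real_powr) auto
  then show ?thesis
    by (simp add: hypergeometric_weight_def algebra_simps diff_divide_distrib)
qed

lemma hypergeometric_solution_eq_0:
  assumes c: "1 < Re c" and abc: "0 < Re (a + b - c)"
    and nz: "\<And>m::nat. (of_nat m + a) * (of_nat m + b) \<noteq> 0"
    and sol: "hypergeometric_solution a b c f f' f''"
    and z: "z \<in> {0..1}"
  shows "f z = 0"
proof -
  define w where "w = hypergeometric_weight a b c"
  have f: "continuous_on {0..1} f"
    using sol by (simp add: hypergeometric_solution_def)
  have w: "continuous_on {0..1} w"
    unfolding w_def using c abc by (rule continuous_on_hypergeometric_weight)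
  have moments: "integral {0..1} (\<lambda>z. w z * f z * of_real (z ^ m)) = 0" for m
    unfolding w_def using has_vector_derivative_hypergeometric_weight
    by (intro hypergeometric_solution_weighted_moments_eq_0[OF sol w[unfolded w_def] _ nz])
  have "f z = 0" if "z \<in> {0<..<1}" for z
  proof -
    have "w z * f z = 0"
      by (rule continuous_orthogonal_to_monomials_eq_0[OF continuous_on_mult[OF w f] moments]) (use that in auto)
    moreover have "w z \<noteq> 0"
      using that by (simp add: w_def hypergeometric_weight_def)
    ultimately show ?thesis
      by simp
  qed
  moreover have "closure {0<..<1} = {0..1::real}"
    by simp
  ultimately show ?thesis
    using continuous_constant_on_closure[of "{0<..<1}" f 0 z] f z by simp
qed

section \<open>Smooth solutions of the hypergeometric equation\<close>

lemma deriv_seq_on_hypergeometric_solution: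
  assumes D: "deriv_seq_on {0..1} D"
    and eq: "\<forall>z\<in>{0..1}. hypergeometric_op a b c z (D k z) (D (Suc k) z) (D (Suc (Suc k)) z) = 0"
  shows "hypergeometric_solution a b c (D k) (D (Suc k)) (D (Suc (Suc k)))"
  unfolding hypergeometric_solution_def
  using deriv_seq_on_continuous[OF D] deriv_seq_on_interior[OF D] eq by auto

lemma hypergeometric_op_deriv_seq_on:
  assumes D: "deriv_seq_on {0..1} D"
    and eq: "\<forall>z\<in>{0..1}. hypergeometric_op a b c z (D k z) (D (Suc k) z) (D (Suc (Suc k)) z) = 0"
  shows "\<forall>z\<in>{0..1}. hypergeometric_op (a + 1) (b + 1) (c + 1) z
           (D (Suc k) z) (D (Suc (Suc k)) z) (D (Suc (Suc (Suc k))) z) = 0"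
proof
  fix z :: real
  assume z: "z \<in> {0..1}"
  have "((\<lambda>z. complex_of_real (z * (1 - z))) has_vector_derivative of_real (1 - 2 * z)) (at z within {0..1})"
    "((\<lambda>z. c - (a + b + 1) * complex_of_real z) has_vector_derivative - (a + b + 1)) (at z within {0..1})"
    by (auto intro!: derivative_eq_intros)
  then have "((\<lambda>z. hypergeometric_op a b c z (D k z) (D (Suc k) z) (D (Suc (Suc k)) z)) has_vector_derivative
      of_real (z * (1 - z)) * D (Suc (Suc (Suc k))) z + of_real (1 - 2 * z) * D (Suc (Suc k)) z
      + ((c - (a + b + 1) * of_real z) * D (Suc (Suc k)) z + - (a + b + 1) * D (Suc k) z)
      - a * b * D (Suc k) z) (at z within {0..1})"
    unfolding hypergeometric_op_def
    by (intro has_vector_derivative_add has_vector_derivative_diff has_vector_derivative_mult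
        has_vector_derivative_mult_right deriv_seq_onD[OF D z]) simp_all
  from has_vector_derivative_eq_0_if_vanishing[OF _ z eq this]
  show "hypergeometric_op (a + 1) (b + 1) (c + 1) z (D (Suc k) z) (D (Suc (Suc k)) z) (D (Suc (Suc (Suc k))) z) = 0"
    by (simp add: hypergeometric_op_def algebra_simps)
qed

lemma smooth_hypergeometric_solution_eq_0:
  assumes D: "deriv_seq_on {0..1} D"
    and eq: "\<forall>z\<in>{0..1}. hypergeometric_op a b c z (D 0 z) (D (Suc 0) z) (D (Suc (Suc 0)) z) = 0"
    and nz: "\<And>m::nat. (of_nat m + a) * (of_nat m + b) \<noteq> 0"
  shows "\<forall>z\<in>{0..1}. D 0 z = 0"
proof -
  have shifted: "\<forall>z\<in>{0..1}. hypergeometric_op (a + of_nat k) (b + of_nat k) (c + of_nat k) z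
      (D k z) (D (Suc k) z) (D (Suc (Suc k)) z) = 0" for k
  proof (induction k)
    case (Suc k)
    then show ?case
      using hypergeometric_op_deriv_seq_on[OF D Suc] by (simp add: ac_simps)
  qed (use eq in simp)
  obtain N :: nat where N: "max (1 - Re c) (- Re (a + b - c)) < real N"
    using reals_Archimedean2 by blast
  have DN: "\<forall>z\<in>{0..1}. D N z = 0"
  proof
    fix z :: real
    assume z: "z \<in> {0..1}"
    have "1 < Re (c + of_nat N)" "0 < Re (a + of_nat N + (b + of_nat N) - (c + of_nat N))"
      using N by simp_all
    moreover have "(of_nat m + (a + of_nat N)) * (of_nat m + (b + of_nat N)) \<noteq> 0" for m
      using nz[of "m + N"] by (simp add: add_ac)
    ultimately show "D N z = 0"
      by (rule hypergeometric_solution_eq_0[OF _ _ _ deriv_seq_on_hypergeometric_solution[OF D shifted[of N]] z])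
  qed
  have "\<forall>z\<in>{0..1}. D k z = 0 \<and> D (Suc k) z = 0" if "k \<le> N" for k
    using that
  proof (induction k rule: inc_induct)
    case base
    show ?case
      using DN has_vector_derivative_eq_0_if_vanishing[OF _ _ DN deriv_seq_onD[OF D]] by auto
  next
    case (step k)
    have "(a + of_nat k) * (b + of_nat k) \<noteq> 0"
      using nz[of k] by (simp add: add.commute)
    with step.IH shifted[of k] show ?case
      by (auto simp: hypergeometric_op_def)
  qed
  then show ?thesis
    by blast
qed

lemma C_inf_hypergeometric_solution_eq_0:
  assumes "C_inf_on {0..1} \<psi>"
    and "\<forall>z\<in>{0..1}. hypergeometric_op a b c z (\<psi> z) (dwithin {0..1} \<psi> z) (dwithin {0..1} (dwithin {0..1} \<psi>) z) = 0"
    and "\<And>m::nat. (of_nat m + a) * (of_nat m + b) \<noteq> 0"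
  shows "\<forall>z\<in>{0..1}. \<psi> z = 0"
proof -
  obtain D where "D 0 = \<psi>" "deriv_seq_on {0..1} D"
    using assms(1) by (auto simp: C_inf_on_iff_deriv_seq_on)
  with assms(2,3) show ?thesis
    using dwithin_deriv_seq_on[of 0 1 D] smooth_hypergeometric_solution_eq_0[of D a b c] by auto
qed

lemma shifted_params_nonzero:
  fixes l :: complex
  assumes "-1 < Re l" "l \<noteq> 0" "l \<noteq> 1"
  shows "(of_nat m + (l - 1)) * (of_nat m + l) \<noteq> 0"
proof -
  have "of_nat m + l \<noteq> 0"
  proof
    assume "of_nat m + l = 0"
    then have "l = - of_nat m"
      by (simp add: add_eq_0_iff2 add.commute)
    with assms show False
      by (cases m) auto
  qed
  moreover have "of_nat m + (l - 1) \<noteq> 0"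
  proof
    assume "of_nat m + (l - 1) = 0"
    then have "l = 1 - of_nat m"
      by (simp add: algebra_simps add_eq_0_iff2)
    with assms show False
      by (cases m) auto
  qed
  ultimately show ?thesis
    by simp
qed

section \<open>The mode equation and its ladder operator\<close>

text \<open>The mode operator of the theorem, written in terms of \<open>s = sqrt (1 - \<alpha>)\<close>, so \<open>\<alpha> = 1 - s\<^sup>2\<close>.\<close>

definition mode_op :: "real \<Rightarrow> complex \<Rightarrow> real \<Rightarrow> complex \<Rightarrow> complex \<Rightarrow> complex \<Rightarrow> complex" where
  "mode_op s \<mu> y f f' f'' =
     (\<mu>\<^sup>2 + \<mu> - 2 * of_real (1 - s\<^sup>2) * \<mu> / of_real (1 + s * y)) * f
   + (2 * \<mu> + 2 - 2 * of_real (1 - s\<^sup>2) / of_real (1 + s * y)) * of_real y * f'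
   + of_real (y\<^sup>2 - 1) * f''"

text \<open>\<open>mode_shift s \<mu> D 0 = (1 + s y)\<^bsup>1-\<mu>\<^esup> ((1 + s y)\<^sup>\<mu> D\<^sub>0)'\<close>, and \<open>mode_shift s \<mu> D\<close> is its
  sequence of derivatives.\<close>

definition mode_shift :: "real \<Rightarrow> complex \<Rightarrow> (nat \<Rightarrow> real \<Rightarrow> complex) \<Rightarrow> nat \<Rightarrow> real \<Rightarrow> complex" where
  "mode_shift s \<mu> D n y = of_real s * (\<mu> + of_nat n) * D n y + of_real (1 + s * y) * D (Suc n) y"

lemma one_plus_mult_pos:
  fixes s y :: real
  assumes "0 \<le> s" "s < 1" "y \<in> {-1..1}"
  shows "0 < 1 + s * y"
proof -
  have "- s \<le> s * y"
    using assms mult_left_mono[of "-1" y s] by auto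
  then show ?thesis
    using assms by linarith
qed

lemma deriv_seq_on_mode_shift:
  assumes "deriv_seq_on {-1..1} D"
  shows "deriv_seq_on {-1..1} (mode_shift s \<mu> D)"
  unfolding deriv_seq_on_def
proof (intro allI ballI)
  fix n and y :: real
  assume y: "y \<in> {-1..1}"
  have "(mode_shift s \<mu> D n has_vector_derivative
      of_real s * (\<mu> + of_nat n) * D (Suc n) y + (of_real (1 + s * y) * D (Suc (Suc n)) y + of_real s * D (Suc n) y))
      (at y within {-1..1})"
    unfolding mode_shift_def[abs_def]
    by (intro derivative_intros deriv_seq_onD[OF assms y]) (auto intro!: derivative_eq_intros)
  then show "(mode_shift s \<mu> D n has_vector_derivative mode_shift s \<mu> D (Suc n) y) (at y within {-1..1})"
    by (simp add: mode_shift_def algebra_simps)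
qed

lemma mode_op_on_shift_kernel:
  assumes "1 + s * y \<noteq> 0"
  shows "mode_op s \<mu> y d (- of_real s * \<mu> * d / of_real (1 + s * y))
      (- of_real s * (\<mu> + 1) * (- of_real s * \<mu> * d / of_real (1 + s * y)) / of_real (1 + s * y))
    = of_real (1 - s\<^sup>2) * \<mu> * (\<mu> - 1) / (of_real (1 + s * y))\<^sup>2 * d"
proof -
  define S Y G where "S = complex_of_real s" and "Y = complex_of_real y" and "G = complex_of_real (1 + s * y)"
  have G: "G = 1 + S * Y" "G \<noteq> 0"
    using assms unfolding S_def Y_def G_def of_real_eq_0_iff by simp_all
  have "(\<mu>\<^sup>2 + \<mu> - 2 * (1 - S\<^sup>2) * \<mu> / G) * d
       + (2 * \<mu> + 2 - 2 * (1 - S\<^sup>2) / G) * Y * (- S * \<mu> * d / G)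
       + (Y\<^sup>2 - 1) * (- S * (\<mu> + 1) * (- S * \<mu> * d / G) / G)
     = ((\<mu>\<^sup>2 + \<mu>) * G\<^sup>2 - 2 * (1 - S\<^sup>2) * \<mu> * G - ((2 * \<mu> + 2) * G - 2 * (1 - S\<^sup>2)) * Y * S * \<mu>
      + (Y\<^sup>2 - 1) * S\<^sup>2 * \<mu> * (\<mu> + 1)) / G\<^sup>2 * d"
    using G(2) by (simp add: field_simps power2_eq_square)
  also have "(\<mu>\<^sup>2 + \<mu>) * G\<^sup>2 - 2 * (1 - S\<^sup>2) * \<mu> * G - ((2 * \<mu> + 2) * G - 2 * (1 - S\<^sup>2)) * Y * S * \<mu>
      + (Y\<^sup>2 - 1) * S\<^sup>2 * \<mu> * (\<mu> + 1) = (1 - S\<^sup>2) * \<mu> * (\<mu> - 1)"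
    unfolding G(1) by (simp add: algebra_simps power2_eq_square)
  finally show ?thesis
    by (simp add: mode_op_def S_def Y_def G_def)
qed

lemma mode_solution_eq_0_if_shift_eq_0:
  assumes s: "0 \<le> s" "s < 1" and \<mu>: "\<mu> \<noteq> 0" "\<mu> \<noteq> 1"
    and D: "deriv_seq_on {-1..1} D"
    and eq: "\<forall>y\<in>{-1..1}. mode_op s \<mu> y (D 0 y) (D (Suc 0) y) (D (Suc (Suc 0)) y) = 0"
    and shift: "\<forall>y\<in>{-1..1}. mode_shift s \<mu> D 0 y = 0"
  shows "\<forall>y\<in>{-1..1}. D 0 y = 0"
proof
  fix y :: real
  assume y: "y \<in> {-1..1}"
  define G where "G = complex_of_real (1 + s * y)"
  have G: "G \<noteq> 0"
    using one_plus_mult_pos[OF s y] unfolding G_def of_real_eq_0_iff by linarith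
  have T0: "mode_shift s \<mu> D 0 y = 0"
    using shift y by blast
  have T1: "mode_shift s \<mu> D (Suc 0) y = 0"
    using has_vector_derivative_eq_0_if_vanishing[OF _ y shift]
      deriv_seq_onD[OF deriv_seq_on_mode_shift[OF D] y] by simp
  have D1: "D (Suc 0) y = - of_real s * \<mu> * D 0 y / G"
    using T0 G unfolding mode_shift_def G_def[symmetric] by (auto simp: field_simps add_eq_0_iff2)
  have D2: "D (Suc (Suc 0)) y = - of_real s * (\<mu> + 1) * D (Suc 0) y / G"
    using T1 G unfolding mode_shift_def G_def[symmetric] by (auto simp: field_simps add_eq_0_iff2)
  have "mode_op s \<mu> y (D 0 y) (D (Suc 0) y) (D (Suc (Suc 0)) y)
      = of_real (1 - s\<^sup>2) * \<mu> * (\<mu> - 1) / G\<^sup>2 * D 0 y"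
    unfolding D2 D1 G_def using one_plus_mult_pos[OF s y] by (intro mode_op_on_shift_kernel) simp
  moreover have "of_real (1 - s\<^sup>2) * \<mu> * (\<mu> - 1) / G\<^sup>2 \<noteq> 0"
  proof -
    have "complex_of_real (1 - s\<^sup>2) \<noteq> 0"
      using s unfolding of_real_eq_0_iff by (simp add: abs_square_eq_1)
    with \<mu> G show ?thesis
      by simp
  qed
  ultimately show "D 0 y = 0"
    using eq y by simp
qed

lemma has_vector_derivative_divide_affine:
  fixes c :: complex
  assumes "1 + s * y \<noteq> 0"
  shows "((\<lambda>y. c / of_real (1 + s * y)) has_vector_derivative
      - c * of_real s / (of_real (1 + s * y))\<^sup>2) (at y within S)"
proof -
  have "((\<lambda>y. 1 / (1 + s * y)) has_real_derivative - s / (1 + s * y)\<^sup>2) (at y within S)"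
    using assms by (auto intro!: derivative_eq_intros simp: power2_eq_square)
  then have "((\<lambda>y. c * of_real (1 / (1 + s * y))) has_vector_derivative c * of_real (- s / (1 + s * y)\<^sup>2))
      (at y within S)"
    by (intro derivative_intros)
  then show ?thesis
    by (simp add: divide_inverse mult.assoc)
qed

lemma has_vector_derivative_mode_op:
  assumes s: "0 \<le> s" "s < 1" and D: "deriv_seq_on {-1..1} D" and y: "y \<in> {-1..1}"
  defines "G \<equiv> complex_of_real (1 + s * y)" and "A \<equiv> complex_of_real (1 - s\<^sup>2)"
  shows "((\<lambda>y. mode_op s \<mu> y (D 0 y) (D (Suc 0) y) (D (Suc (Suc 0)) y)) has_vector_derivative
      mode_op s \<mu> y (D (Suc 0) y) (D (Suc (Suc 0)) y) (D (Suc (Suc (Suc 0))) y)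
      + 2 * A * \<mu> * of_real s / G\<^sup>2 * D 0 y
      + (2 * A * of_real s / G\<^sup>2 * of_real y + (2 * \<mu> + 2 - 2 * A / G)) * D (Suc 0) y
      + 2 * of_real y * D (Suc (Suc 0)) y) (at y within {-1..1})"
proof -
  have G: "1 + s * y \<noteq> 0"
    using one_plus_mult_pos[OF s y] by simp
  have "((\<lambda>y. complex_of_real y) has_vector_derivative 1) (at y within {-1..1})"
    using has_vector_derivative_of_real[OF DERIV_ident] by simp
  then have dA: "((\<lambda>y. \<mu>\<^sup>2 + \<mu> - 2 * A * \<mu> / of_real (1 + s * y)) has_vector_derivative
      0 - - (2 * A * \<mu>) * of_real s / (of_real (1 + s * y))\<^sup>2) (at y within {-1..1})"
    and dB: "((\<lambda>y. (2 * \<mu> + 2 - 2 * A / of_real (1 + s * y)) * of_real y) has_vector_derivative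
      (2 * \<mu> + 2 - 2 * A / of_real (1 + s * y)) * 1
      + (0 - - (2 * A) * of_real s / (of_real (1 + s * y))\<^sup>2) * of_real y) (at y within {-1..1})"
    by (intro has_vector_derivative_mult has_vector_derivative_diff has_vector_derivative_const
        has_vector_derivative_divide_affine G)+
  have dC: "((\<lambda>y. complex_of_real (y\<^sup>2 - 1)) has_vector_derivative of_real (2 * y)) (at y within {-1..1})"
    by (intro has_vector_derivative_of_real) (auto intro!: derivative_eq_intros)
  have "((\<lambda>y. mode_op s \<mu> y (D 0 y) (D (Suc 0) y) (D (Suc (Suc 0)) y)) has_vector_derivative
      (\<mu>\<^sup>2 + \<mu> - 2 * A * \<mu> / of_real (1 + s * y)) * D (Suc 0) y
      + (0 - - (2 * A * \<mu>) * of_real s / (of_real (1 + s * y))\<^sup>2) * D 0 y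
      + ((2 * \<mu> + 2 - 2 * A / of_real (1 + s * y)) * of_real y * D (Suc (Suc 0)) y
         + ((2 * \<mu> + 2 - 2 * A / of_real (1 + s * y)) * 1
            + (0 - - (2 * A) * of_real s / (of_real (1 + s * y))\<^sup>2) * of_real y) * D (Suc 0) y)
      + (of_real (y\<^sup>2 - 1) * D (Suc (Suc (Suc 0))) y + of_real (2 * y) * D (Suc (Suc 0)) y))
      (at y within {-1..1})"
    unfolding mode_op_def A_def[symmetric]
    by (intro has_vector_derivative_add has_vector_derivative_mult[OF dA] has_vector_derivative_mult[OF dB]
        has_vector_derivative_mult[OF dC] deriv_seq_onD[OF D y])
  then show ?thesis
    unfolding G_def mode_op_def A_def[symmetric] by (elim has_vector_derivative_eq_rhs) (simp add: algebra_simps)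
qed

lemma mode_op_mode_shift_eq:
  assumes "1 + s * y \<noteq> 0"
  defines "G \<equiv> complex_of_real (1 + s * y)" and "A \<equiv> complex_of_real (1 - s\<^sup>2)"
  shows "mode_op s (\<mu> + 1) y (of_real s * \<mu> * d0 + G * d1) (of_real s * (\<mu> + 1) * d1 + G * d2)
        (of_real s * (\<mu> + 2) * d2 + G * d3)
    = G * (mode_op s \<mu> y d1 d2 d3 + 2 * A * \<mu> * of_real s / G\<^sup>2 * d0
           + (2 * A * of_real s / G\<^sup>2 * of_real y + (2 * \<mu> + 2 - 2 * A / G)) * d1 + 2 * of_real y * d2)
      + of_real s * (\<mu> + 2) * mode_op s \<mu> y d0 d1 d2"
proof -
  have "G \<noteq> 0"
    using assms(1) unfolding G_def of_real_eq_0_iff .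
  then show ?thesis
    unfolding mode_op_def A_def[symmetric] G_def[symmetric] by (simp add: field_simps power2_eq_square)
qed

lemma mode_solution_mode_shift:
  assumes s: "0 \<le> s" "s < 1" and D: "deriv_seq_on {-1..1} D"
    and eq: "\<forall>y\<in>{-1..1}. mode_op s \<mu> y (D 0 y) (D (Suc 0) y) (D (Suc (Suc 0)) y) = 0"
  shows "\<forall>y\<in>{-1..1}. mode_op s (\<mu> + 1) y
           (mode_shift s \<mu> D 0 y) (mode_shift s \<mu> D (Suc 0) y) (mode_shift s \<mu> D (Suc (Suc 0)) y) = 0"
proof
  fix y :: real
  assume y: "y \<in> {-1..1}"
  have G: "1 + s * y \<noteq> 0"
    using one_plus_mult_pos[OF s y] by simp
  have "mode_shift s \<mu> D 0 y = of_real s * \<mu> * D 0 y + of_real (1 + s * y) * D (Suc 0) y"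
    "mode_shift s \<mu> D (Suc 0) y = of_real s * (\<mu> + 1) * D (Suc 0) y + of_real (1 + s * y) * D (Suc (Suc 0)) y"
    "mode_shift s \<mu> D (Suc (Suc 0)) y
      = of_real s * (\<mu> + 2) * D (Suc (Suc 0)) y + of_real (1 + s * y) * D (Suc (Suc (Suc 0))) y"
    by (simp_all add: mode_shift_def)
  then show "mode_op s (\<mu> + 1) y
      (mode_shift s \<mu> D 0 y) (mode_shift s \<mu> D (Suc 0) y) (mode_shift s \<mu> D (Suc (Suc 0)) y) = 0"
    using has_vector_derivative_eq_0_if_vanishing[OF _ y eq has_vector_derivative_mode_op[OF s D y]] eq y
    by (simp only: mode_op_mode_shift_eq[OF G]) simp
qed

section \<open>Reduction of the mode equation to the hypergeometric equation\<close>

text \<open>The inverse map is \<open>y \<mapsto> (1 + s) (1 + y) / (2 (1 + s y))\<close>, and \<open>(1 + s - 2 s z) (1 + s y) = 1 - s\<^sup>2\<close>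
  for \<open>y = mode_coord s z\<close>.\<close>

definition mode_coord :: "real \<Rightarrow> real \<Rightarrow> real" where
  "mode_coord s z = (2 * z - 1 - s) / (1 + s - 2 * s * z)"

lemma mode_coord_denom_pos:
  fixes s z :: real
  assumes "0 \<le> s" "s < 1" "z \<le> 1"
  shows "0 < 1 + s - 2 * s * z"
proof -
  have "s * z \<le> s"
    using assms mult_left_mono[of z 1 s] by simp
  then show ?thesis
    using assms by linarith
qed

lemma one_plus_minus_mode_coord:
  assumes "0 \<le> s" "s < 1" "z \<le> 1"
  shows "1 + mode_coord s z = 2 * z * (1 - s) / (1 + s - 2 * s * z)"
    and "1 - mode_coord s z = 2 * (1 + s) * (1 - z) / (1 + s - 2 * s * z)"
  using mode_coord_denom_pos[OF assms] by (simp_all add: mode_coord_def field_simps)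

lemma mode_coord_mem:
  assumes s: "0 \<le> s" "s < 1" and z: "z \<in> {0..1}"
  shows "mode_coord s z \<in> {-1..1}"
  using one_plus_minus_mode_coord[OF s] mode_coord_denom_pos[OF s] s z
  by (smt (verit, ccfv_SIG) atLeastAtMost_iff divide_nonneg_pos mult_nonneg_nonneg)

lemma mode_coord_mem_interior:
  assumes s: "0 \<le> s" "s < 1" and z: "z \<in> {0<..<1}"
  shows "mode_coord s z \<in> {-1<..<1}"
  using one_plus_minus_mode_coord[OF s] mode_coord_denom_pos[OF s] s z
  by (smt (verit, ccfv_SIG) greaterThanLessThan_iff divide_pos_pos mult_pos_pos)

lemma mode_coord_surj:
  assumes s: "0 \<le> s" "s < 1" and y: "y \<in> {-1..1}"
  obtains z where "z \<in> {0..1}" "mode_coord s z = y"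
proof
  define z where "z = (1 + s) * (1 + y) / (2 * (1 + s * y))"
  have pos: "0 < 1 + s * y"
    using one_plus_mult_pos[OF s y] .
  have "(1 + s) * (1 + y) \<le> 2 * (1 + s * y)"
    using s y mult_nonneg_nonneg[of "1 - y" "1 - s"] by (simp add: algebra_simps)
  then show "z \<in> {0..1}"
    using pos s y mult_nonneg_nonneg[of "1 + s" "1 + y"] by (auto simp: z_def field_simps)
  have "1 + s - 2 * s * z = (1 - s\<^sup>2) / (1 + s * y)"
    using pos by (simp add: z_def field_simps power2_eq_square)
  moreover have "2 * z - 1 - s = (1 - s\<^sup>2) * y / (1 + s * y)"
    using pos by (simp add: z_def field_simps power2_eq_square)
  moreover have "1 - s\<^sup>2 \<noteq> 0"
    using s by (simp add: abs_square_eq_1)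
  ultimately show "mode_coord s z = y"
    using pos by (simp add: mode_coord_def)
qed

lemma has_real_derivative_mode_coord:
  assumes "0 \<le> s" "s < 1" "z \<le> 1"
  shows "(mode_coord s has_real_derivative 2 * (1 - s\<^sup>2) / (1 + s - 2 * s * z)\<^sup>2) (at z)"
proof -
  have "1 + s - 2 * s * z \<noteq> 0"
    using mode_coord_denom_pos[OF assms] by simp
  then have "((\<lambda>z. (2 * z - 1 - s) / (1 + s - 2 * s * z)) has_real_derivative
      (2 * (1 + s - 2 * s * z) - (2 * z - 1 - s) * - (2 * s)) / (1 + s - 2 * s * z)\<^sup>2) (at z)"
    by (auto intro!: derivative_eq_intros simp: power2_eq_square)
  moreover have "2 * (1 + s - 2 * s * z) - (2 * z - 1 - s) * - (2 * s) = 2 * (1 - s\<^sup>2)"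
    by (simp add: algebra_simps power2_eq_square)
  ultimately show ?thesis
    unfolding mode_coord_def[abs_def] by metis
qed

lemma mode_transform_coefficients:
  fixes Gc S Z \<mu> :: complex
  assumes G: "Gc = 1 + S - 2 * S * Z" "Gc \<noteq> 0"
  defines "A \<equiv> 1 - S\<^sup>2" and "M \<equiv> (2 * Z - 1 - S) / Gc" and "K \<equiv> \<mu> - S - 2 * \<mu> * Z"
  shows "Z * (1 - Z) * (4 * S\<^sup>2 / Gc\<^sup>2 * \<mu> * (\<mu> + 1)) + K * (2 * S / Gc * \<mu>) - (\<mu> - 1) * \<mu>
      = - (A / Gc\<^sup>2) * (\<mu>\<^sup>2 + \<mu> - 2 * \<mu> * Gc)"
    and "Z * (1 - Z) * (8 * S * A / Gc ^ 3 * (\<mu> + 1)) + K * (2 * A / Gc\<^sup>2) = - (A / Gc\<^sup>2) * ((2 * \<mu> + 2 - 2 * Gc) * M)"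
    and "Z * (1 - Z) * (4 * A\<^sup>2 / Gc ^ 4) = - (A / Gc\<^sup>2) * (M\<^sup>2 - 1)"
proof -
  have "4 * S\<^sup>2 * Z * (1 - Z) * \<mu> * (\<mu> + 1) + 2 * S * \<mu> * K * Gc - (\<mu> - 1) * \<mu> * Gc\<^sup>2
      = - A * (\<mu>\<^sup>2 + \<mu> - 2 * \<mu> * Gc)"
    unfolding G(1) A_def K_def by (simp add: algebra_simps power2_eq_square)
  moreover have "Z * (1 - Z) * (4 * S\<^sup>2 / Gc\<^sup>2 * \<mu> * (\<mu> + 1)) + K * (2 * S / Gc * \<mu>) - (\<mu> - 1) * \<mu>
      = (4 * S\<^sup>2 * Z * (1 - Z) * \<mu> * (\<mu> + 1) + 2 * S * \<mu> * K * Gc - (\<mu> - 1) * \<mu> * Gc\<^sup>2) / Gc\<^sup>2"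
    using G(2) by (simp add: field_simps power2_eq_square)
  ultimately show "Z * (1 - Z) * (4 * S\<^sup>2 / Gc\<^sup>2 * \<mu> * (\<mu> + 1)) + K * (2 * S / Gc * \<mu>) - (\<mu> - 1) * \<mu>
      = - (A / Gc\<^sup>2) * (\<mu>\<^sup>2 + \<mu> - 2 * \<mu> * Gc)"
    by simp
  have p1: "4 * S * Z * (1 - Z) * (\<mu> + 1) + K * Gc = - (\<mu> + 1 - Gc) * (2 * Z - 1 - S)"
    unfolding G(1) K_def by (simp add: algebra_simps)
  have "Z * (1 - Z) * (8 * S * A / Gc ^ 3 * (\<mu> + 1)) + K * (2 * A / Gc\<^sup>2)
      = 2 * A / Gc ^ 3 * (4 * S * Z * (1 - Z) * (\<mu> + 1) + K * Gc)"
    using G(2) by (simp add: field_simps eval_nat_numeral)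
  also have "\<dots> = - (A / Gc\<^sup>2) * ((2 * \<mu> + 2 - 2 * Gc) * M)"
    unfolding p1 M_def using G(2) by (simp add: field_simps eval_nat_numeral)
  finally show "Z * (1 - Z) * (8 * S * A / Gc ^ 3 * (\<mu> + 1)) + K * (2 * A / Gc\<^sup>2)
      = - (A / Gc\<^sup>2) * ((2 * \<mu> + 2 - 2 * Gc) * M)" .
  have p2: "(2 * Z - 1 - S)\<^sup>2 - Gc\<^sup>2 = - 4 * A * Z * (1 - Z)"
    unfolding G(1) A_def by (simp add: algebra_simps power2_eq_square)
  have "M\<^sup>2 - 1 = ((2 * Z - 1 - S)\<^sup>2 - Gc\<^sup>2) / Gc\<^sup>2"
    unfolding M_def using G(2) by (simp add: field_simps)
  then have m: "M\<^sup>2 - 1 = - 4 * A * Z * (1 - Z) / Gc\<^sup>2"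
    unfolding p2 .
  show "Z * (1 - Z) * (4 * A\<^sup>2 / Gc ^ 4) = - (A / Gc\<^sup>2) * (M\<^sup>2 - 1)"
    unfolding m using G(2) by (simp add: field_simps eval_nat_numeral)
qed

lemma mode_op_mode_coord:
  assumes s: "0 \<le> s" "s < 1" and z: "z \<le> 1"
  defines "G \<equiv> complex_of_real (1 + s - 2 * s * z)" and "M \<equiv> complex_of_real (mode_coord s z)"
  shows "mode_op s \<mu> (mode_coord s z) d0 d1 d2
    = (\<mu>\<^sup>2 + \<mu> - 2 * \<mu> * G) * d0 + (2 * \<mu> + 2 - 2 * G) * M * d1 + (M\<^sup>2 - 1) * d2"
proof -
  define A where "A = complex_of_real (1 - s\<^sup>2)"
  have G: "G \<noteq> 0"
    using mode_coord_denom_pos[OF s z] unfolding G_def of_real_eq_0_iff by simp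
  have A: "A \<noteq> 0"
    using s unfolding A_def of_real_eq_0_iff by (simp add: abs_square_eq_1)
  have "1 + s * mode_coord s z = (1 - s\<^sup>2) / (1 + s - 2 * s * z)"
    using mode_coord_denom_pos[OF s z] by (simp add: mode_coord_def field_simps power2_eq_square)
  then have g: "complex_of_real (1 + s * mode_coord s z) = A / G"
    unfolding A_def G_def by simp
  show ?thesis
    unfolding mode_op_def g A_def[symmetric] unfolding of_real_diff of_real_power of_real_1 M_def[symmetric]
    using A G by (simp add: field_simps)
qed

lemma hypergeometric_op_mode_transform:
  assumes s: "0 \<le> s" "s < 1" and z: "z \<le> 1"
  defines "G \<equiv> 1 + s - 2 * s * z" and "A \<equiv> 1 - s\<^sup>2"
  shows "hypergeometric_op (\<mu> - 1) \<mu> (\<mu> - of_real s) z (e * d0)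
      (e * (of_real (2 * s / G) * \<mu> * d0 + of_real (2 * A / G\<^sup>2) * d1))
      (e * (of_real (4 * s\<^sup>2 / G\<^sup>2) * \<mu> * (\<mu> + 1) * d0 + of_real (8 * s * A / G ^ 3) * (\<mu> + 1) * d1
            + of_real (4 * A\<^sup>2 / G ^ 4) * d2))
    = - e * of_real (A / G\<^sup>2) * mode_op s \<mu> (mode_coord s z) d0 d1 d2"
proof -
  define Gc S Z Ac where "Gc = complex_of_real G" and "S = complex_of_real s" and "Z = complex_of_real z"
    and "Ac = complex_of_real A"
  have Gc: "Gc = 1 + S - 2 * S * Z" "Gc \<noteq> 0"
    using mode_coord_denom_pos[OF s z] unfolding Gc_def of_real_eq_0_iff by (simp_all add: S_def Z_def G_def)
  have Ac: "Ac = 1 - S\<^sup>2"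
    by (simp add: Ac_def A_def S_def)
  have M: "complex_of_real (mode_coord s z) = (2 * Z - 1 - S) / Gc"
    by (simp add: mode_coord_def Gc_def G_def S_def Z_def)
  have "hypergeometric_op (\<mu> - 1) \<mu> (\<mu> - of_real s) z (e * d0)
      (e * (of_real (2 * s / G) * \<mu> * d0 + of_real (2 * A / G\<^sup>2) * d1))
      (e * (of_real (4 * s\<^sup>2 / G\<^sup>2) * \<mu> * (\<mu> + 1) * d0 + of_real (8 * s * A / G ^ 3) * (\<mu> + 1) * d1
            + of_real (4 * A\<^sup>2 / G ^ 4) * d2))
    = e * ((Z * (1 - Z) * (4 * S\<^sup>2 / Gc\<^sup>2 * \<mu> * (\<mu> + 1)) + (\<mu> - S - 2 * \<mu> * Z) * (2 * S / Gc * \<mu>)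
            - (\<mu> - 1) * \<mu>) * d0
         + (Z * (1 - Z) * (8 * S * Ac / Gc ^ 3 * (\<mu> + 1)) + (\<mu> - S - 2 * \<mu> * Z) * (2 * Ac / Gc\<^sup>2)) * d1
         + (Z * (1 - Z) * (4 * Ac\<^sup>2 / Gc ^ 4)) * d2)"
    unfolding hypergeometric_op_def of_real_mult of_real_divide of_real_power of_real_numeral of_real_diff
      of_real_1 Gc_def[symmetric] S_def[symmetric] Z_def[symmetric] Ac_def[symmetric]
    using Gc(2) by (simp add: field_simps eval_nat_numeral)
  also have "\<dots> = - e * (Ac / Gc\<^sup>2) * mode_op s \<mu> (mode_coord s z) d0 d1 d2"
    unfolding mode_transform_coefficients[OF Gc, folded M Ac] mode_op_mode_coord[OF s z, folded G_def Gc_def]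
    by (simp add: algebra_simps add_divide_distrib diff_divide_distrib)
  finally show ?thesis
    by (simp add: Gc_def Ac_def)
qed


lemma has_vector_derivative_comp_mode_coord:
  assumes s: "0 \<le> s" "s < 1" and D: "deriv_seq_on {-1..1} D" and z: "z \<in> {0<..<1}"
  shows "((\<lambda>z. D k (mode_coord s z)) has_vector_derivative
      of_real (2 * (1 - s\<^sup>2) / (1 + s - 2 * s * z)\<^sup>2) * D (Suc k) (mode_coord s z)) (at z)"
proof -
  have "(mode_coord s has_vector_derivative 2 * (1 - s\<^sup>2) / (1 + s - 2 * s * z)\<^sup>2) (at z)"
    using has_real_derivative_mode_coord[OF s] z by (simp add: has_real_derivative_iff_has_vector_derivative)
  moreover have "(D k has_vector_derivative D (Suc k) (mode_coord s z)) (at (mode_coord s z))"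
    using deriv_seq_on_interior[OF D mode_coord_mem_interior[OF s z]] .
  ultimately have "(D k \<circ> mode_coord s has_vector_derivative
      (2 * (1 - s\<^sup>2) / (1 + s - 2 * s * z)\<^sup>2) *\<^sub>R D (Suc k) (mode_coord s z)) (at z)"
    by (rule vector_diff_chain_at)
  then show ?thesis
    by (simp add: o_def scaleR_conv_of_real)
qed

lemma continuous_on_comp_mode_coord:
  assumes s: "0 \<le> s" "s < 1" and D: "deriv_seq_on {-1..1} D"
  shows "continuous_on {0..1} (\<lambda>z. D k (mode_coord s z))"
proof (rule continuous_on_compose2[OF deriv_seq_on_continuous[OF D]])
  show "continuous_on {0..1} (mode_coord s)"
    using mode_coord_denom_pos[OF s] unfolding mode_coord_def
    by (intro continuous_intros) (auto simp: less_le)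
qed (use mode_coord_mem[OF s] in auto)

lemma has_vector_derivative_mode_weight:
  fixes \<mu> :: complex
  assumes s: "0 \<le> s" "s < 1" and z: "z \<le> 1"
  shows "((\<lambda>z. of_real (1 + s - 2 * s * z) powr (- \<mu>)) has_vector_derivative
      of_real (2 * s) * \<mu> * of_real (1 + s - 2 * s * z) powr (- \<mu>) / of_real (1 + s - 2 * s * z)) (at z)"
proof -
  have "((\<lambda>z. 1 + s - 2 * s * z) has_vector_derivative - (2 * s)) (at z)"
    by (auto intro!: derivative_eq_intros simp: has_real_derivative_iff_has_vector_derivative[symmetric])
  from this has_vector_derivative_of_real_powr[OF mode_coord_denom_pos[OF s z], of "- \<mu>" UNIV]
  have "((\<lambda>x. of_real x powr (- \<mu>)) \<circ> (\<lambda>z. 1 + s - 2 * s * z) has_vector_derivative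
      - (2 * s) *\<^sub>R (- \<mu> * of_real (1 + s - 2 * s * z) powr (- \<mu>) / of_real (1 + s - 2 * s * z))) (at z)"
    by (rule vector_diff_chain_at)
  then show ?thesis
    by (simp add: o_def scaleR_conv_of_real mult.assoc)
qed


lemma continuous_on_mode_weight:
  fixes \<mu> :: complex
  assumes "0 \<le> s" "s < 1"
  shows "continuous_on {0..1} (\<lambda>z. of_real (1 + s - 2 * s * z) powr (- \<mu>))"
  unfolding continuous_on_eq_continuous_within
  using has_vector_derivative_mode_weight[OF assms]
  by (meson atLeastAtMost_iff has_vector_derivative_at_within has_vector_derivative_continuous)

lemma mode_transform_has_derivatives:
  fixes \<mu> :: complex
  assumes s: "0 \<le> s" "s < 1" and D: "deriv_seq_on {-1..1} D" and z: "z \<in> {0<..<1}"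
  defines "G \<equiv> \<lambda>z. 1 + s - 2 * s * z" and "A \<equiv> 1 - s\<^sup>2"
    and "E \<equiv> \<lambda>z. complex_of_real (1 + s - 2 * s * z) powr (- \<mu>)" and "m \<equiv> mode_coord s"
  shows "((\<lambda>z. E z * D 0 (m z)) has_vector_derivative
      E z * (of_real (2 * s / G z) * \<mu> * D 0 (m z) + of_real (2 * A / (G z)\<^sup>2) * D (Suc 0) (m z))) (at z)"
    and "((\<lambda>z. E z * (of_real (2 * s / G z) * \<mu> * D 0 (m z) + of_real (2 * A / (G z)\<^sup>2) * D (Suc 0) (m z)))
      has_vector_derivative
      E z * (of_real (4 * s\<^sup>2 / (G z)\<^sup>2) * \<mu> * (\<mu> + 1) * D 0 (m z)
        + of_real (8 * s * A / G z ^ 3) * (\<mu> + 1) * D (Suc 0) (m z)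
        + of_real (4 * A\<^sup>2 / G z ^ 4) * D (Suc (Suc 0)) (m z))) (at z)"
proof -
  have G: "G z \<noteq> 0"
    using mode_coord_denom_pos[OF s, of z] z by (simp add: G_def)
  have dE: "(E has_vector_derivative of_real (2 * s) * \<mu> * E z / of_real (G z)) (at z)"
    using has_vector_derivative_mode_weight[OF s, of z \<mu>] z by (simp add: E_def G_def)
  have dD: "((\<lambda>z. D k (m z)) has_vector_derivative of_real (2 * A / (G z)\<^sup>2) * D (Suc k) (m z)) (at z)" for k
    using has_vector_derivative_comp_mode_coord[OF s D z] by (simp add: m_def A_def G_def)
  have dG: "(G has_real_derivative - (2 * s)) (at z)"
    unfolding G_def by (auto intro!: derivative_eq_intros)
  have "((\<lambda>z. 2 * s / G z) has_real_derivative 4 * s\<^sup>2 / (G z)\<^sup>2) (at z)"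
    and "((\<lambda>z. 2 * A / (G z)\<^sup>2) has_real_derivative 8 * s * A / G z ^ 3) (at z)"
    using G by (auto intro!: derivative_eq_intros dG simp: field_simps power2_eq_square eval_nat_numeral)
  note dc = this[THEN has_vector_derivative_of_real]
  show "((\<lambda>z. E z * D 0 (m z)) has_vector_derivative
      E z * (of_real (2 * s / G z) * \<mu> * D 0 (m z) + of_real (2 * A / (G z)\<^sup>2) * D (Suc 0) (m z))) (at z)"
    using has_vector_derivative_mult[OF dE dD[of 0]]
    by (elim has_vector_derivative_eq_rhs) (simp add: algebra_simps)
  show "((\<lambda>z. E z * (of_real (2 * s / G z) * \<mu> * D 0 (m z) + of_real (2 * A / (G z)\<^sup>2) * D (Suc 0) (m z)))
      has_vector_derivative
      E z * (of_real (4 * s\<^sup>2 / (G z)\<^sup>2) * \<mu> * (\<mu> + 1) * D 0 (m z)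
        + of_real (8 * s * A / G z ^ 3) * (\<mu> + 1) * D (Suc 0) (m z)
        + of_real (4 * A\<^sup>2 / G z ^ 4) * D (Suc (Suc 0)) (m z))) (at z)"
    using has_vector_derivative_mult[OF dE has_vector_derivative_add[OF
        has_vector_derivative_mult[OF has_vector_derivative_mult_left[OF dc(1), of \<mu>] dD[of 0]]
        has_vector_derivative_mult[OF dc(2) dD[of "Suc 0"]]]]
    by (elim has_vector_derivative_eq_rhs) (use G in \<open>simp add: field_simps power2_eq_square eval_nat_numeral\<close>)
qed


lemma mode_transform_hypergeometric_solution:
  assumes s: "0 \<le> s" "s < 1" and D: "deriv_seq_on {-1..1} D"
    and eq: "\<forall>y\<in>{-1..1}. mode_op s \<mu> y (D 0 y) (D (Suc 0) y) (D (Suc (Suc 0)) y) = 0"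
  shows "\<exists>F' F''. hypergeometric_solution (\<mu> - 1) \<mu> (\<mu> - of_real s)
           (\<lambda>z. of_real (1 + s - 2 * s * z) powr (- \<mu>) * D 0 (mode_coord s z)) F' F''"
proof (intro exI)
  define G A E m where "G z = 1 + s - 2 * s * z" and "A = 1 - s\<^sup>2"
    and "E z = complex_of_real (1 + s - 2 * s * z) powr (- \<mu>)" and "m = mode_coord s" for z
  define F' where "F' z = E z * (of_real (2 * s / G z) * \<mu> * D 0 (m z) + of_real (2 * A / (G z)\<^sup>2) * D (Suc 0) (m z))"
    for z
  define F'' where "F'' z = E z * (of_real (4 * s\<^sup>2 / (G z)\<^sup>2) * \<mu> * (\<mu> + 1) * D 0 (m z)
      + of_real (8 * s * A / G z ^ 3) * (\<mu> + 1) * D (Suc 0) (m z) + of_real (4 * A\<^sup>2 / G z ^ 4) * D (Suc (Suc 0)) (m z))"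
    for z
  have G: "G z \<noteq> 0" if "z \<in> {0..1}" for z
    using mode_coord_denom_pos[OF s, of z] that by (simp add: G_def)
  have cE: "continuous_on {0..1} E"
    unfolding E_def[abs_def] using s by (rule continuous_on_mode_weight)
  have cDm: "continuous_on {0..1} (\<lambda>z. D k (m z))" for k
    unfolding m_def by (rule continuous_on_comp_mode_coord[OF s D])
  have cG: "continuous_on {0..1} G"
    unfolding G_def[abs_def] by (intro continuous_intros)
  have "continuous_on {0..1} (\<lambda>z. E z * D 0 (m z))" "continuous_on {0..1} F'"
    unfolding F'_def using G by (intro continuous_intros cE cDm cG; simp)+
  moreover have "((\<lambda>z. E z * D 0 (m z)) has_vector_derivative F' z) (at z)"
    and "(F' has_vector_derivative F'' z) (at z)" if "z \<in> {0<..<1}" for z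
    using mode_transform_has_derivatives[OF s D that, of \<mu>]
    unfolding F'_def[abs_def] F''_def G_def A_def E_def m_def by simp_all
  moreover have "hypergeometric_op (\<mu> - 1) \<mu> (\<mu> - of_real s) z (E z * D 0 (m z)) (F' z) (F'' z) = 0"
    if "z \<in> {0<..<1}" for z
  proof -
    have "hypergeometric_op (\<mu> - 1) \<mu> (\<mu> - of_real s) z (E z * D 0 (m z)) (F' z) (F'' z)
        = - E z * of_real (A / (G z)\<^sup>2) * mode_op s \<mu> (m z) (D 0 (m z)) (D (Suc 0) (m z)) (D (Suc (Suc 0)) (m z))"
      unfolding F'_def F''_def G_def A_def m_def
      by (rule hypergeometric_op_mode_transform[OF s]) (use that in simp)
    moreover have "m z \<in> {-1..1}"
      using mode_coord_mem[OF s] that unfolding m_def by simp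
    ultimately show ?thesis
      using eq by simp
  qed
  ultimately show "hypergeometric_solution (\<mu> - 1) \<mu> (\<mu> - of_real s)
      (\<lambda>z. of_real (1 + s - 2 * s * z) powr (- \<mu>) * D 0 (mode_coord s z)) F' F''"
    unfolding hypergeometric_solution_def E_def m_def by blast
qed


lemma mode_solution_eq_0_if_Re_gt:
  assumes s: "0 \<le> s" "s < 1" and \<mu>: "1 + s < Re \<mu>" and D: "deriv_seq_on {-1..1} D"
    and eq: "\<forall>y\<in>{-1..1}. mode_op s \<mu> y (D 0 y) (D (Suc 0) y) (D (Suc (Suc 0)) y) = 0"
  shows "\<forall>y\<in>{-1..1}. D 0 y = 0"
proof
  fix y :: real
  assume y: "y \<in> {-1..1}"
  obtain F' F'' where sol: "hypergeometric_solution (\<mu> - 1) \<mu> (\<mu> - of_real s)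
      (\<lambda>z. of_real (1 + s - 2 * s * z) powr (- \<mu>) * D 0 (mode_coord s z)) F' F''"
    using mode_transform_hypergeometric_solution[OF s D eq] by blast
  obtain z where z: "z \<in> {0..1}" "mode_coord s z = y"
    using mode_coord_surj[OF s y] .
  have "(of_nat k + (\<mu> - 1)) * (of_nat k + \<mu>) \<noteq> 0" for k :: nat
  proof -
    have "0 < Re (of_nat k + (\<mu> - 1))" "0 < Re (of_nat k + \<mu>)"
      using \<mu> s by auto
    then show ?thesis
      by (metis less_irrefl mult_eq_0_iff zero_complex.sel(1))
  qed
  with sol z(1) \<mu> s have "of_real (1 + s - 2 * s * z) powr (- \<mu>) * D 0 (mode_coord s z) = 0"
    by (intro hypergeometric_solution_eq_0) auto
  moreover have "complex_of_real (1 + s - 2 * s * z) \<noteq> 0"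
    using mode_coord_denom_pos[OF s, of z] z(1) unfolding of_real_eq_0_iff by simp
  ultimately show "D 0 y = 0"
    using z(2) by simp
qed

section \<open>Mode stability\<close>

lemma mode_smooth_solution_eq_0:
  assumes s: "0 \<le> s" "s < 1" and \<mu>: "0 \<le> Re \<mu>" "\<mu> \<noteq> 0" "\<mu> \<noteq> 1" and D: "deriv_seq_on {-1..1} D"
    and eq: "\<forall>y\<in>{-1..1}. mode_op s \<mu> y (D 0 y) (D (Suc 0) y) (D (Suc (Suc 0)) y) = 0"
  shows "\<forall>y\<in>{-1..1}. D 0 y = 0"
proof -
  define D' where "D' = mode_shift s \<mu> D"
  have D': "deriv_seq_on {-1..1} D'" "deriv_seq_on {-1..1} (mode_shift s (\<mu> + 1) D')"
    unfolding D'_def by (intro deriv_seq_on_mode_shift D)+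
  have eq': "\<forall>y\<in>{-1..1}. mode_op s (\<mu> + 1) y (D' 0 y) (D' (Suc 0) y) (D' (Suc (Suc 0)) y) = 0"
    unfolding D'_def by (rule mode_solution_mode_shift[OF s D eq])
  have "\<forall>y\<in>{-1..1}. mode_shift s (\<mu> + 1) D' 0 y = 0"
    using s \<mu> by (intro mode_solution_eq_0_if_Re_gt[OF s _ D'(2) mode_solution_mode_shift[OF s D'(1) eq']]) simp
  then have "\<forall>y\<in>{-1..1}. D' 0 y = 0"
    using \<mu> by (intro mode_solution_eq_0_if_shift_eq_0[OF s _ _ D'(1) eq']) (auto simp: complex_eq_iff)
  then show ?thesis
    using \<mu> by (intro mode_solution_eq_0_if_shift_eq_0[OF s _ _ D eq]) (auto simp: D'_def)
qed

lemma C_inf_mode_solution_eq_0: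
  assumes s: "0 \<le> s" "s < 1" and \<mu>: "0 \<le> Re \<mu>" "\<mu> \<noteq> 0" "\<mu> \<noteq> 1"
    and "C_inf_on {-1..1} \<phi>"
    and "\<forall>y\<in>{-1..1}. mode_op s \<mu> y (\<phi> y) (dwithin {-1..1} \<phi> y) (dwithin {-1..1} (dwithin {-1..1} \<phi>) y) = 0"
  shows "\<forall>y\<in>{-1..1}. \<phi> y = 0"
proof -
  obtain D where "D 0 = \<phi>" "deriv_seq_on {-1..1} D"
    using assms(6) by (auto simp: C_inf_on_iff_deriv_seq_on)
  with assms(7) show ?thesis
    using dwithin_deriv_seq_on[of "-1" 1 D] mode_smooth_solution_eq_0[OF s \<mu>, of D] by auto
qed

theorem proposition3p3:
  fixes \<alpha> :: real
  assumes "0 < \<alpha>" and "\<alpha> \<le> 1"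
  shows "(\<forall>l::complex. Re l > -1 \<and> l \<noteq> 0 \<and> l \<noteq> 1 \<longrightarrow>
           \<not> (\<exists>\<psi>. C_inf_on {0..1} \<psi> \<and> (\<exists>z\<in>{0..1}. \<psi> z \<noteq> 0) \<and>
                 (\<forall>z\<in>{0..1}.
                    of_real (z * (1 - z)) * dwithin {0..1} (dwithin {0..1} \<psi>) z
                  + (l - of_real (sqrt (1 - \<alpha>)) - 2 * l * of_real z) * dwithin {0..1} \<psi> z
                  - l * (l - 1) * \<psi> z = 0)))
       \<and> (\<forall>l::complex.
           (\<exists>\<phi>. C_inf_on {-1..1} \<phi> \<and> (\<exists>y\<in>{-1..1}. \<phi> y \<noteq> 0) \<and>
              (\<forall>y\<in>{-1..1}.
                 (l\<^sup>2 + l - 2 * of_real \<alpha> * l / of_real (1 + sqrt (1 - \<alpha>) * y)) * \<phi> y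
               + (2 * l + 2 - 2 * of_real \<alpha> / of_real (1 + sqrt (1 - \<alpha>) * y))
                   * of_real y * dwithin {-1..1} \<phi> y
               + of_real (y\<^sup>2 - 1) * dwithin {-1..1} (dwithin {-1..1} \<phi>) y = 0))
           \<longrightarrow> Re l < 0 \<or> l \<in> {0, 1})"
proof -
  define s where "s = sqrt (1 - \<alpha>)"
  have s: "0 \<le> s" "s < 1" and \<alpha>: "1 - s\<^sup>2 = \<alpha>"
    using assms by (auto simp: s_def)
  have hyp: "hypergeometric_op (l - 1) l (l - of_real s) z f f' f''
      = of_real (z * (1 - z)) * f'' + (l - of_real s - 2 * l * of_real z) * f' - l * (l - 1) * f" for l z f f' f''
    by (simp add: hypergeometric_op_def algebra_simps)
  show ?thesis
    \<comment> \<open>\<open>sqrt (1 - \<alpha>)\<close> has to become \<open>s\<close> before \<open>\<alpha>\<close> is replaced by \<open>1 - s\<^sup>2\<close>\<close>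
    unfolding s_def[symmetric] unfolding \<alpha>[symmetric] unfolding hyp[symmetric] mode_op_def[symmetric]
  proof (intro conjI allI impI notI)
    fix l :: complex
    assume "-1 < Re l \<and> l \<noteq> 0 \<and> l \<noteq> 1"
      and "\<exists>\<psi>. C_inf_on {0..1} \<psi> \<and> (\<exists>z\<in>{0..1}. \<psi> z \<noteq> 0) \<and> (\<forall>z\<in>{0..1}.
        hypergeometric_op (l - 1) l (l - of_real s) z (\<psi> z) (dwithin {0..1} \<psi> z) (dwithin {0..1} (dwithin {0..1} \<psi>) z) = 0)"
    then show False
      using C_inf_hypergeometric_solution_eq_0 shifted_params_nonzero[of l] by blast
  next
    fix l :: complex
    assume "\<exists>\<phi>. C_inf_on {-1..1} \<phi> \<and> (\<exists>y\<in>{-1..1}. \<phi> y \<noteq> 0) \<and> (\<forall>y\<in>{-1..1}.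
      mode_op s l y (\<phi> y) (dwithin {-1..1} \<phi> y) (dwithin {-1..1} (dwithin {-1..1} \<phi>) y) = 0)"
    then show "Re l < 0 \<or> l \<in> {0, 1}"
      using C_inf_mode_solution_eq_0[OF s, of l] by force
  qed
qed

end
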